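(* For every $i\in\{0,\ldots,k-n\}$, the cone $C_i\subseteq\mathcal{F}_{n+1,2d}$ is closed (with respect to the Euclidean topology on the finite-dimensional real vector space $\mathcal{F}_{n+1,2d}$).
   Context: Let $n,d\geq 1$ be integers. $\mathcal{F}_{n+1,l}$ denotes the real vector space of real forms (homogeneous polynomials) of degree $l$ in the variables $X=(X_0,\ldots,X_n)$. Let $k=k(n,d):=\binom{n+d}{n}-1$, so $\dim\mathcal{F}_{n+1,d}=k+1$. Order the set $I_{n+1,d}:=\{\alpha\in\mathbb{N}_0^{n+1}: |\alpha|=d\}$ lexicographically in decreasing order as $\alpha_0,\ldots,\alpha_k$ (so $\alpha_0=(d,0,\ldots,0)$ and $\alpha_k=(0,\ldots,0,d)$), and set $m_j(X):=X^{\alpha_j}$ for $j=0,\ldots,k$. For a real symmetric matrix $A\in\mathrm{Sym}_{k+1}(\mathbb{R})$ let $q_A(Z):=ZAZ^t$ be the associated quadratic form in $Z=(Z_0,\ldots,Z_k)$, and let the Gram map $\mathcal{G}:\mathrm{Sym}_{k+1}(\mathbb{R})\to\mathcal{F}_{n+1,2d}$ be $\mathcal{G}(A):=q_A(m_0(X),\ldots,m_k(X))$. For $i\in\{0,\ldots,k-n\}$ let $H_i:=\{[z]\in\mathbb{P}^k(\mathbb{C}) : \exists x\in\mathbb{C}^{n+1}\text{ with }(z_0,\ldots,z_{n+i})=(m_0(x),\ldots,m_{n+i}(x))\}$, let $V_i$ be the Zariski closure of $H_i$ in $\mathbb{P}^k$, and let $V_i(\mathbb{R})$ denote its set of real points.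 Define the convex cone $C_i:=\{f\in\mathcal{F}_{n+1,2d} : \exists A\in\mathcal{G}^{-1}(f)\text{ such that } q_A(z)\geq 0 \text{ for all } [z]\in V_i(\mathbb{R})\}$ (the sign of $q_A(z)$ is independent of the representative $z$). *)

theory Defs
  imports "HOL-Analysis.Analysis" "HOL-Library.List_Lexorder"
begin

definition Iexp :: "nat \<Rightarrow> nat \<Rightarrow> nat list set" where
  "Iexp m e = {\<alpha>. length \<alpha> = m \<and> sum_list \<alpha> = e}"

definition kk :: "nat \<Rightarrow> nat \<Rightarrow> nat" where
  "kk n d = (n + d choose n) - 1"

definition alph :: "nat \<Rightarrow> nat \<Rightarrow> nat \<Rightarrow> nat list" where
  "alph n d j = rev (sorted_list_of_set (Iexp (Suc n) d)) ! j"

definition monom_eval :: "nat list \<Rightarrow> (nat \<Rightarrow> 'a::comm_semiring_1) \<Rightarrow> 'a" where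
  "monom_eval \<alpha> x = (\<Prod>i<length \<alpha>. x i ^ (\<alpha> ! i))"

definition mj :: "nat \<Rightarrow> nat \<Rightarrow> nat \<Rightarrow> (nat \<Rightarrow> 'a::comm_semiring_1) \<Rightarrow> 'a" where
  "mj n d j x = monom_eval (alph n d j) x"

text \<open>Real forms of degree l in n+1 variables, as coefficient functions on exponent vectors.\<close>
definition Forms :: "nat \<Rightarrow> nat \<Rightarrow> (nat list \<Rightarrow> real) set" where
  "Forms n l = {f. \<forall>\<beta>. \<beta> \<notin> Iexp (Suc n) l \<longrightarrow> f \<beta> = 0}"

definition SymMat :: "nat \<Rightarrow> (nat \<Rightarrow> nat \<Rightarrow> real) set" where
  "SymMat k = {A. (\<forall>j l. A j l = A l j) \<and> (\<forall>j l. k < j \<or> k < l \<longrightarrow> A j l = 0)}"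

definition qform :: "nat \<Rightarrow> (nat \<Rightarrow> nat \<Rightarrow> 'a::comm_ring_1) \<Rightarrow> (nat \<Rightarrow> 'a) \<Rightarrow> 'a" where
  "qform k A z = (\<Sum>j\<le>k. \<Sum>l\<le>k. z j * A j l * z l)"

text \<open>Gram map: coefficients of q_A(m_0(X),...,m_k(X)).\<close>
definition Gram :: "nat \<Rightarrow> nat \<Rightarrow> (nat \<Rightarrow> nat \<Rightarrow> real) \<Rightarrow> (nat list \<Rightarrow> real)" where
  "Gram n d A = (\<lambda>\<beta>. \<Sum>j\<le>kk n d. \<Sum>l\<le>kk n d.
      (if map2 (+) (alph n d j) (alph n d l) = \<beta> then A j l else 0))"

text \<open>Nonzero vectors in C^{k+1} (representatives of points of P^k).\<close>
definition nonzero_vec :: "nat \<Rightarrow> (nat \<Rightarrow> 'a::zero) \<Rightarrow> bool" where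
  "nonzero_vec k z = (\<exists>j\<le>k. z j \<noteq> 0)"

text \<open>H_i, as the cone of representatives z in C^{k+1} - 0.\<close>
definition Hcone :: "nat \<Rightarrow> nat \<Rightarrow> nat \<Rightarrow> (nat \<Rightarrow> complex) set" where
  "Hcone n d i = {z. nonzero_vec (kk n d) z \<and>
      (\<exists>x::nat \<Rightarrow> complex. \<forall>j\<le>n + i. z j = mj n d j x)}"

definition hpoly_eval :: "nat \<Rightarrow> nat \<Rightarrow> (nat list \<Rightarrow> complex) \<Rightarrow> (nat \<Rightarrow> complex) \<Rightarrow> complex" where
  "hpoly_eval k e c z = (\<Sum>\<beta>\<in>Iexp (Suc k) e. c \<beta> * monom_eval \<beta> z)"

definition zariski_closure :: "nat \<Rightarrow> (nat \<Rightarrow> complex) set \<Rightarrow> (nat \<Rightarrow> complex) set" where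
  "zariski_closure k S = {z. nonzero_vec k z \<and>
      (\<forall>e c. (\<forall>w\<in>S. hpoly_eval k e c w = 0) \<longrightarrow> hpoly_eval k e c z = 0)}"

definition Vcone :: "nat \<Rightarrow> nat \<Rightarrow> nat \<Rightarrow> (nat \<Rightarrow> complex) set" where
  "Vcone n d i = zariski_closure (kk n d) (Hcone n d i)"

definition Vreal :: "nat \<Rightarrow> nat \<Rightarrow> nat \<Rightarrow> (nat \<Rightarrow> real) set" where
  "Vreal n d i = {z. nonzero_vec (kk n d) z \<and> (\<lambda>j. complex_of_real (z j)) \<in> Vcone n d i}"

definition Ccone :: "nat \<Rightarrow> nat \<Rightarrow> nat \<Rightarrow> (nat list \<Rightarrow> real) set" where
  "Ccone n d i = {f \<in> Forms n (2 * d). \<exists>A\<in>SymMat (kk n d). Gram n d A = f \<and>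
      (\<forall>z\<in>Vreal n d i. qform (kk n d) A z \<ge> 0)}"

end

theory Submission
  imports Defs "HOL-Computational_Algebra.Polynomial"
begin

text \<open>\<open>C\<^sub>i\<close> is the image under the Gram map of the closed cone of symmetric matrices \<open>A\<close> with
  \<open>q\<^sub>A \<ge> 0\<close> on \<open>V\<^sub>i(\<real>)\<close>, but the Gram map has a kernel on that cone.  Averaging \<open>A\<close> over the
  classes of index pairs \<open>j, l \<le> n + i\<close> with equal exponent sum \<open>\<alpha>\<^sub>j + \<alpha>\<^sub>l\<close> changes neither its
  Gram image nor \<open>q\<^sub>A\<close> on \<open>V\<^sub>i(\<real>)\<close>: the difference is a quadratic form vanishing on \<open>H\<^sub>i\<close>, hence
  on its Zariski closure.  On averaged matrices the kernel is trivial: if \<open>Gram A = 0\<close> and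
  \<open>q\<^sub>A \<ge> 0\<close> on \<open>V\<^sub>i(\<real>)\<close>, then every row \<open>j > n + i\<close> of \<open>A\<close> vanishes, because the coordinate \<open>z\<^sub>j\<close>
  is free on \<open>H\<^sub>i\<close> while \<open>q\<^sub>A\<close> vanishes at \<open>(m\<^sub>0(x), \<dots>, m\<^sub>k(x))\<close>; the remaining entries are constant
  on classes whose sums are the coefficients of \<open>Gram A\<close>.  Finally, a closed cone mapped linearly
  with trivial kernel has closed image: were the preimages of a convergent sequence unbounded,
  their normalisations would accumulate at a nonzero element of the kernel.\<close>

section \<open>Averages over classes\<close>

definition class_avg :: "'p set \<Rightarrow> ('p \<Rightarrow> 'k) \<Rightarrow> ('p \<Rightarrow> real) \<Rightarrow> 'p \<Rightarrow> real" where
  "class_avg P \<kappa> a p = (if p \<in> P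
     then (\<Sum>q\<in>{q\<in>P. \<kappa> q = \<kappa> p}. a q) / real (card {q\<in>P. \<kappa> q = \<kappa> p}) else a p)"

definition const_on_classes :: "'p set \<Rightarrow> ('p \<Rightarrow> 'k) \<Rightarrow> ('p \<Rightarrow> real) \<Rightarrow> bool" where
  "const_on_classes P \<kappa> a \<longleftrightarrow> (\<forall>p\<in>P. \<forall>q\<in>P. \<kappa> p = \<kappa> q \<longrightarrow> a p = a q)"

lemma const_on_classes_class_avg: "const_on_classes P \<kappa> (class_avg P \<kappa> a)"
  unfolding const_on_classes_def class_avg_def by simp

lemma sum_class_avg:
  assumes "finite P"
  shows "(\<Sum>q\<in>{q\<in>P. \<kappa> q = k}. class_avg P \<kappa> a q) = (\<Sum>q\<in>{q\<in>P. \<kappa> q = k}. a q)"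
proof (cases "{q\<in>P. \<kappa> q = k} = {}")
  case True
  then show ?thesis by (simp only: sum.empty)
next
  case False
  let ?C = "{q\<in>P. \<kappa> q = k}"
  have "(\<Sum>q\<in>?C. class_avg P \<kappa> a q) = (\<Sum>q\<in>?C. (\<Sum>q\<in>?C. a q) / real (card ?C))"
    by (rule sum.cong) (auto simp: class_avg_def)
  moreover have "card ?C > 0" using False assms by (simp add: card_gt_0_iff)
  ultimately show ?thesis by simp
qed

lemma const_on_classes_zero:
  assumes "finite P" "const_on_classes P \<kappa> a" "p \<in> P" "(\<Sum>q\<in>{q\<in>P. \<kappa> q = \<kappa> p}. a q) = 0"
  shows "a p = 0"
proof -
  let ?C = "{q\<in>P. \<kappa> q = \<kappa> p}"
  have "a q = a p" if "q \<in> ?C" for q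
    using that assms(2,3) unfolding const_on_classes_def by blast
  then have "(\<Sum>q\<in>?C. a q) = (\<Sum>q\<in>?C. a p)" by (rule sum.cong[OF refl])
  moreover have "card ?C > 0" using assms(1,3) by (auto simp: card_gt_0_iff)
  ultimately show ?thesis using assms(4) by simp
qed

lemma const_on_classes_limit:
  assumes "\<And>t. const_on_classes P \<kappa> (a t)" "\<And>p. (\<lambda>t. a t p) \<longlonglongrightarrow> b p"
  shows "const_on_classes P \<kappa> b"
  unfolding const_on_classes_def
proof (intro ballI impI)
  fix p q assume "p \<in> P" "q \<in> P" "\<kappa> p = \<kappa> q"
  then have "(\<lambda>t. a t p) = (\<lambda>t. a t q)" using assms(1) unfolding const_on_classes_def by blast
  with assms(2)[of p] assms(2)[of q] show "b p = b q" by (simp add: LIMSEQ_unique)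
qed

lemma const_on_classes_divide:
  "const_on_classes P \<kappa> a \<Longrightarrow> const_on_classes P \<kappa> (\<lambda>p. a p / c)"
  unfolding const_on_classes_def by metis

section \<open>Closed images of cones of matrices\<close>

definition entry_norm :: "nat \<Rightarrow> (nat \<Rightarrow> nat \<Rightarrow> real) \<Rightarrow> real" where
  "entry_norm K M = (\<Sum>p\<in>{..K} \<times> {..K}. \<bar>M (fst p) (snd p)\<bar>)"

lemma abs_le_entry_norm:
  assumes "M \<in> SymMat K"
  shows "\<bar>M j l\<bar> \<le> entry_norm K M"
proof (cases "j \<le> K \<and> l \<le> K")
  case True
  then show ?thesis unfolding entry_norm_def
    using member_le_sum[of "(j, l)" "{..K} \<times> {..K}" "\<lambda>p. \<bar>M (fst p) (snd p)\<bar>"] by auto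
next
  case False
  then have "M j l = 0" using assms unfolding SymMat_def by auto
  then show ?thesis unfolding entry_norm_def by (simp add: sum_nonneg)
qed

lemma entry_norm_divide: "0 < c \<Longrightarrow> entry_norm K (\<lambda>j l. M j l / c) = entry_norm K M / c"
  unfolding entry_norm_def sum_divide_distrib by (simp add: abs_divide)

lemma entry_norm_limit:
  assumes "\<And>j l. (\<lambda>t. G t j l) \<longlonglongrightarrow> G' j l"
  shows "(\<lambda>t. entry_norm K (G t)) \<longlonglongrightarrow> entry_norm K G'"
  unfolding entry_norm_def by (intro tendsto_sum tendsto_rabs assms)

lemma convergent_subseq_finite:
  fixes X :: "nat \<Rightarrow> 'p \<Rightarrow> real"
  assumes "finite P" "\<And>t p. p \<in> P \<Longrightarrow> \<bar>X t p\<bar> \<le> B"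
  shows "\<exists>r. strict_mono r \<and> (\<forall>p\<in>P. convergent (\<lambda>t. X (r t) p))"
  using assms
proof (induction P rule: finite_induct)
  case empty
  show ?case by (rule exI[of _ id]) (simp add: strict_mono_def)
next
  case (insert p P)
  then obtain r where r: "strict_mono r" "\<forall>q\<in>P. convergent (\<lambda>t. X (r t) q)" by auto
  have "bounded (range (\<lambda>t. X (r t) p))"
    unfolding bounded_real using insert.prems by auto
  then obtain l r2 where r2: "strict_mono r2" "((\<lambda>t. X (r t) p) \<circ> r2) \<longlonglongrightarrow> l"
    using bounded_imp_convergent_subsequence by blast
  have "strict_mono (r \<circ> r2)" using r r2 strict_mono_o by blast
  moreover have "convergent (\<lambda>t. X ((r \<circ> r2) t) p)"
    using r2 by (auto simp: convergent_def o_def)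
  moreover have "convergent (\<lambda>t. X ((r \<circ> r2) t) q)" if "q \<in> P" for q
    using convergent_subseq_convergent[OF r(2)[rule_format, OF that] r2(1)] by (simp add: o_def)
  ultimately show ?case by blast
qed

lemma SymMat_convergent_subseq:
  fixes G :: "nat \<Rightarrow> nat \<Rightarrow> nat \<Rightarrow> real"
  assumes G: "\<And>t. G t \<in> SymMat K" and bound: "\<And>t. entry_norm K (G t) \<le> B"
  shows "\<exists>r G'. strict_mono r \<and> (\<forall>j l. (\<lambda>t. G (r t) j l) \<longlonglongrightarrow> G' j l)"
proof -
  have "\<bar>G t (fst p) (snd p)\<bar> \<le> B" for t p
    using abs_le_entry_norm[OF G] bound order_trans by blast
  then obtain r where r: "strict_mono r"
      "\<forall>p\<in>{..K} \<times> {..K}. convergent (\<lambda>t. G (r t) (fst p) (snd p))"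
    using convergent_subseq_finite[of "{..K} \<times> {..K}" "\<lambda>t p. G t (fst p) (snd p)" B] by auto
  have "convergent (\<lambda>t. G (r t) j l)" for j l
  proof (cases "j \<le> K \<and> l \<le> K")
    case True
    then show ?thesis using r(2) by force
  next
    case False
    then have "(\<lambda>t. G (r t) j l) = (\<lambda>t. 0)" using G unfolding SymMat_def by auto
    then show ?thesis by (simp add: convergent_const)
  qed
  then have "\<forall>j l. (\<lambda>t. G (r t) j l) \<longlonglongrightarrow> lim (\<lambda>t. G (r t) j l)"
    by (simp add: convergent_LIMSEQ_iff)
  with r(1) show ?thesis by (intro exI[of _ r] exI[of _ "\<lambda>j l. lim (\<lambda>t. G (r t) j l)"]) simp
qed

context
  fixes K :: nat and S :: "(nat \<Rightarrow> nat \<Rightarrow> real) set"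
    and L :: "(nat \<Rightarrow> nat \<Rightarrow> real) \<Rightarrow> 'b::countable \<Rightarrow> real"
  assumes S_SymMat: "S \<subseteq> SymMat K"
    and S_divide: "\<And>A c. A \<in> S \<Longrightarrow> 0 < c \<Longrightarrow> (\<lambda>j l. A j l / c) \<in> S"
    and S_limit: "\<And>G G'. (\<And>t. G t \<in> S) \<Longrightarrow> (\<And>j l. (\<lambda>t. G t j l) \<longlonglongrightarrow> G' j l) \<Longrightarrow> G' \<in> S"
    and L_divide: "\<And>A c \<beta>. L (\<lambda>j l. A j l / c) \<beta> = L A \<beta> / c"
    and L_limit: "\<And>G G' \<beta>. (\<And>j l. (\<lambda>t. G t j l) \<longlonglongrightarrow> G' j l) \<Longrightarrow> (\<lambda>t. L (G t) \<beta>) \<longlonglongrightarrow> L G' \<beta>"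
    and L_kernel: "\<And>A j l. A \<in> S \<Longrightarrow> (\<And>\<beta>. L A \<beta> = 0) \<Longrightarrow> A j l = 0"
begin

lemma cone_preimage_bounded:
  assumes A: "\<And>t. A t \<in> S" and image_bounded: "\<And>\<beta>. Bseq (\<lambda>t. L (A t) \<beta>)"
  shows "\<exists>M. \<forall>t. entry_norm K (A t) \<le> M"
proof (rule ccontr)
  assume "\<nexists>M. \<forall>t. entry_norm K (A t) \<le> M"
  then have "\<forall>m::nat. \<exists>t. real m < entry_norm K (A t)" by (meson not_le)
  then obtain s where s: "\<And>m. real m < entry_norm K (A (s m))" by metis
  have pos: "0 < entry_norm K (A (s m))" for m
    using s[of m] of_nat_0_le_iff order.strict_trans1 by blast
  define E where "E m = (\<lambda>j l. A (s m) j l / entry_norm K (A (s m)))" for m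
  have E_S: "E m \<in> S" for m unfolding E_def using A pos by (rule S_divide)
  have norm_E: "entry_norm K (E m) = 1" for m
    unfolding E_def using pos[of m] by (simp add: entry_norm_divide)
  obtain r E' where r: "strict_mono r" and lim: "\<And>j l. (\<lambda>t. E (r t) j l) \<longlonglongrightarrow> E' j l"
    using SymMat_convergent_subseq[of E K 1] E_S S_SymMat norm_E by (metis order_refl subsetD)
  have "E' \<in> S" using E_S lim by (rule S_limit)
  have "(\<lambda>t. entry_norm K (E (r t))) \<longlonglongrightarrow> entry_norm K E'" by (rule entry_norm_limit[OF lim])
  then have norm_E': "entry_norm K E' = 1" unfolding norm_E by (simp add: LIMSEQ_const_iff)
  have "L E' \<beta> = 0" for \<beta>
  proof -
    obtain C where C: "\<And>t. \<bar>L (A t) \<beta>\<bar> \<le> C" using image_bounded[of \<beta>] unfolding Bseq_def real_norm_def by blast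
    have "(\<lambda>m. L (E m) \<beta>) \<longlonglongrightarrow> 0"
    proof (rule Lim_null_comparison)
      show "\<forall>\<^sub>F m in sequentially. norm (L (E m) \<beta>) \<le> C / real m"
      proof (rule eventually_sequentiallyI[of 1])
        fix m :: nat assume "1 \<le> m"
        then have "\<bar>L (A (s m)) \<beta>\<bar> / entry_norm K (A (s m)) \<le> C / real m"
          using C[of "s m"] s[of m] by (intro frac_le) auto
        then show "norm (L (E m) \<beta>) \<le> C / real m"
          unfolding E_def L_divide using pos[of m] by (simp add: abs_divide)
      qed
    qed (rule lim_const_over_n)
    then have "(\<lambda>t. L (E (r t)) \<beta>) \<longlonglongrightarrow> 0"
      using LIMSEQ_subseq_LIMSEQ[OF _ r] by (simp add: o_def)
    with L_limit[OF lim] show ?thesis by (rule LIMSEQ_unique)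
  qed
  then have "entry_norm K E' = 0"
    unfolding entry_norm_def using L_kernel[OF \<open>E' \<in> S\<close>] by simp
  with norm_E' show False by simp
qed

lemma closed_cone_image: "closed (L ` S)"
  unfolding closed_sequential_limits
proof (intro allI impI, elim conjE)
  fix F f assume mem: "\<forall>t. F t \<in> L ` S" and lim: "F \<longlonglongrightarrow> f"
  then obtain A where A: "\<And>t. A t \<in> S" and F: "\<And>t. F t = L (A t)"
    unfolding image_iff by metis
  have pointwise: "(\<lambda>t. L (A t) \<beta>) \<longlonglongrightarrow> f \<beta>" for \<beta>
    using continuous_on_tendsto_compose[OF continuous_on_product_coordinates lim] F by simp
  obtain M where "\<And>t. entry_norm K (A t) \<le> M"
    using cone_preimage_bounded[OF A convergent_imp_Bseq[OF convergentI[OF pointwise]]] by blast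
  then obtain r G' where r: "strict_mono r" and G': "\<And>j l. (\<lambda>t. A (r t) j l) \<longlonglongrightarrow> G' j l"
    using SymMat_convergent_subseq[of A K M] A S_SymMat by blast
  have "G' \<in> S" using A G' by (rule S_limit)
  moreover have "L G' = f"
  proof
    fix \<beta>
    have "(\<lambda>t. L (A (r t)) \<beta>) \<longlonglongrightarrow> f \<beta>"
      using LIMSEQ_subseq_LIMSEQ[OF pointwise r] by (simp add: o_def)
    with L_limit[OF G'] show "L G' \<beta> = f \<beta>" by (rule LIMSEQ_unique)
  qed
  ultimately show "f \<in> L ` S" by blast
qed

end

lemma finite_Iexp: "finite (Iexp m e)"
proof -
  have "Iexp m e \<subseteq> {xs. set xs \<subseteq> {..e} \<and> length xs = m}"
    by (auto simp: Iexp_def intro: member_le_sum_list)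
  then show ?thesis using finite_lists_length_eq[of "{..e}" m] finite_subset by blast
qed

lemma card_Iexp: "card (Iexp (Suc n) d) = (n + d choose n)"
proof -
  have "card (Iexp (Suc n) d) = (d + Suc n - 1) choose d"
    unfolding Iexp_def using card_length_sum_list[of "Suc n" d] by simp
  also have "\<dots> = (n + d choose n)"
    using binomial_symmetric[of n "n + d"] by (simp add: add.commute)
  finally show ?thesis .
qed

lemma length_sorted_Iexp: "length (sorted_list_of_set (Iexp (Suc n) d)) = Suc (kk n d)"
  using card_Iexp[of n d] finite_Iexp by (simp add: kk_def Suc_diff_1)

lemma alph_in_Iexp: "j \<le> kk n d \<Longrightarrow> alph n d j \<in> Iexp (Suc n) d"
  using length_sorted_Iexp[of n d] finite_Iexp
  by (metis alph_def length_rev less_Suc_eq_le nth_mem set_rev set_sorted_list_of_set)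

lemma inj_on_alph: "inj_on (alph n d) {..kk n d}"
  using length_sorted_Iexp[of n d]
  by (auto simp: inj_on_def alph_def nth_eq_iff_index_eq)

lemma sum_list_map2_add:
  "length a = length b \<Longrightarrow> sum_list (map2 (+) a b) = sum_list a + sum_list (b :: nat list)"
  by (induction a arbitrary: b) (auto simp: Suc_length_conv)

lemma map2_add_commute: "map2 (+) a b = map2 (+) b (a :: nat list)"
  by (induction a arbitrary: b) (auto simp: zip_Cons1 split: list.splits)

lemma map2_add_Iexp: "a \<in> Iexp m e1 \<Longrightarrow> b \<in> Iexp m e2 \<Longrightarrow> map2 (+) a b \<in> Iexp m (e1 + e2)"
  by (auto simp: Iexp_def sum_list_map2_add)

lemma monom_eval_map2_add:
  "length a = length b \<Longrightarrow> monom_eval (map2 (+) a b) x = monom_eval a x * monom_eval b x"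
  unfolding monom_eval_def by (simp add: power_add prod.distrib)

lemma mj_mult:
  "j \<le> kk n d \<Longrightarrow> l \<le> kk n d \<Longrightarrow>
    mj n d j x * mj n d l x = monom_eval (map2 (+) (alph n d j) (alph n d l)) x"
  unfolding mj_def using alph_in_Iexp[of j n d] alph_in_Iexp[of l n d]
  by (simp add: monom_eval_map2_add Iexp_def)

lemma qform_mj_eq_Gram:
  fixes x :: "nat \<Rightarrow> 'a::{comm_ring_1, real_algebra_1}"
  shows "qform (kk n d) (\<lambda>j l. of_real (A j l)) (\<lambda>j. mj n d j x) =
    (\<Sum>\<beta>\<in>Iexp (Suc n) (2 * d). of_real (Gram n d A \<beta>) * monom_eval \<beta> x)"
proof -
  let ?K = "kk n d" and ?s = "\<lambda>j l. map2 (+) (alph n d j) (alph n d l)"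
  have "(\<Sum>\<beta>\<in>Iexp (Suc n) (2 * d). of_real (Gram n d A \<beta>) * monom_eval \<beta> x)
      = (\<Sum>\<beta>\<in>Iexp (Suc n) (2 * d). \<Sum>j\<le>?K. \<Sum>l\<le>?K.
          if ?s j l = \<beta> then of_real (A j l) * monom_eval \<beta> x else 0)"
    unfolding Gram_def of_real_sum sum_distrib_right by (intro sum.cong refl) simp
  also have "\<dots> = (\<Sum>j\<le>?K. \<Sum>l\<le>?K. \<Sum>\<beta>\<in>Iexp (Suc n) (2 * d).
          if ?s j l = \<beta> then of_real (A j l) * monom_eval \<beta> x else 0)"
    by (subst sum.swap, subst (2) sum.swap, rule refl)
  also have "\<dots> = (\<Sum>j\<le>?K. \<Sum>l\<le>?K. of_real (A j l) * monom_eval (?s j l) x)"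
    using map2_add_Iexp[OF alph_in_Iexp alph_in_Iexp]
    by (intro sum.cong refl) (simp add: finite_Iexp sum.delta mult_2)
  also have "\<dots> = qform ?K (\<lambda>j l. of_real (A j l)) (\<lambda>j. mj n d j x)"
    unfolding qform_def by (intro sum.cong refl) (simp add: mj_mult[symmetric] mult_ac)
  finally show ?thesis ..
qed

lemma Gram_diff: "Gram n d (\<lambda>j l. X j l - Y j l) \<beta> = Gram n d X \<beta> - Gram n d Y \<beta>"
  unfolding Gram_def by (simp add: sum_subtractf[symmetric] if_distrib cong: if_cong)

lemma Gram_divide: "Gram n d (\<lambda>j l. X j l / c) \<beta> = Gram n d X \<beta> / c"
  unfolding Gram_def sum_divide_distrib by (intro sum.cong refl) simp

lemma Gram_limit:
  assumes "\<And>j l. (\<lambda>t. G t j l) \<longlonglongrightarrow> G' j l"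
  shows "(\<lambda>t. Gram n d (G t) \<beta>) \<longlonglongrightarrow> Gram n d G' \<beta>"
  unfolding Gram_def by (intro tendsto_sum) (simp add: assms)

lemma Gram_in_Forms: "Gram n d A \<in> Forms n (2 * d)"
  unfolding Forms_def
proof (intro CollectI allI impI)
  fix \<beta> assume "\<beta> \<notin> Iexp (Suc n) (2 * d)"
  then have "map2 (+) (alph n d j) (alph n d l) \<noteq> \<beta>" if "j \<le> kk n d" "l \<le> kk n d" for j l
    using map2_add_Iexp[OF alph_in_Iexp[OF that(1)] alph_in_Iexp[OF that(2)]] by (auto simp: mult_2)
  then show "Gram n d A \<beta> = 0" unfolding Gram_def by (intro sum.neutral ballI) auto
qed

lemma qform_diff: "qform K (\<lambda>j l. X j l - Y j l) z = qform K X z - qform K Y (z :: nat \<Rightarrow> real)"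
  unfolding qform_def by (simp add: sum_subtractf[symmetric] algebra_simps)

lemma qform_divide: "qform K (\<lambda>j l. X j l / c) z = qform K X z / (c :: real)"
  unfolding qform_def by (simp add: sum_divide_distrib)

lemma qform_limit:
  assumes "\<And>j l. (\<lambda>t. G t j l) \<longlonglongrightarrow> G' j l"
  shows "(\<lambda>t. qform K (G t) z) \<longlonglongrightarrow> qform K G' (z :: nat \<Rightarrow> real)"
  unfolding qform_def by (intro tendsto_sum tendsto_mult tendsto_const assms)

lemma qform_zero_vec: "\<not> nonzero_vec K z \<Longrightarrow> qform K A z = (0::real)"
  unfolding nonzero_vec_def qform_def by auto

lemma qform_shift_coordinate:
  fixes A :: "nat \<Rightarrow> nat \<Rightarrow> real" and u :: "nat \<Rightarrow> real" and t :: real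
  assumes sym: "\<And>j l. A j l = A l j" and j0: "j0 \<le> K"
  shows "qform K A (\<lambda>j. u j + (if j = j0 then t else 0)) =
    qform K A u + 2 * t * (\<Sum>l\<le>K. A j0 l * u l) + t\<^sup>2 * A j0 j0"
proof -
  let ?e = "\<lambda>j. if j = j0 then t else (0::real)"
  have "qform K A (\<lambda>j. u j + ?e j) = qform K A u
     + (\<Sum>j\<le>K. \<Sum>l\<le>K. ?e j * A j l * u l) + (\<Sum>j\<le>K. \<Sum>l\<le>K. u j * A j l * ?e l)
     + (\<Sum>j\<le>K. \<Sum>l\<le>K. ?e j * A j l * ?e l)"
    unfolding qform_def by (simp add: sum.distrib[symmetric] algebra_simps)
  also have "(\<Sum>j\<le>K. \<Sum>l\<le>K. ?e j * A j l * u l) = t * (\<Sum>l\<le>K. A j0 l * u l)"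
  proof -
    have "(\<Sum>l\<le>K. ?e j * A j l * u l) = (if j = j0 then t * (\<Sum>l\<le>K. A j0 l * u l) else 0)" for j
      by (simp add: sum_distrib_left mult_ac)
    then show ?thesis using j0 by (simp add: sum.delta)
  qed
  also have "(\<Sum>j\<le>K. \<Sum>l\<le>K. u j * A j l * ?e l) = t * (\<Sum>l\<le>K. A j0 l * u l)"
  proof -
    have "(\<Sum>j\<le>K. \<Sum>l\<le>K. u j * A j l * ?e l) = (\<Sum>j\<le>K. u j * A j j0 * t)"
      using j0 by (intro sum.cong refl) (simp add: if_distrib[of "\<lambda>x. _ * x"] sum.delta cong: if_cong)
    also have "\<dots> = t * (\<Sum>l\<le>K. A j0 l * u l)"
      by (simp add: sum_distrib_left sym[of _ j0] mult_ac)
    finally show ?thesis .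
  qed
  also have "(\<Sum>j\<le>K. \<Sum>l\<le>K. ?e j * A j l * ?e l) = t\<^sup>2 * A j0 j0"
  proof -
    have "(\<Sum>l\<le>K. ?e j * A j l * ?e l) = (if j = j0 then t\<^sup>2 * A j0 j0 else 0)" for j
      using j0 by (cases "j = j0")
        (simp_all add: if_distrib[of "\<lambda>x. _ * x"] sum.delta power2_eq_square mult_ac cong: if_cong)
    then show ?thesis using j0 by (simp add: sum.delta)
  qed
  finally show ?thesis by simp
qed

lemma nonneg_quadratic_linear_coeff_zero:
  fixes a b :: real
  assumes "\<And>t. 0 \<le> 2 * t * a + t\<^sup>2 * b"
  shows "a = 0"
proof (rule ccontr)
  assume a: "a \<noteq> 0"
  define c where "c = \<bar>b\<bar> + 1"
  have c: "c > 0" "b < 2 * c" unfolding c_def by auto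
  have "0 \<le> 2 * (- a / c) * a + (- a / c)\<^sup>2 * b" by (rule assms)
  also have "\<dots> = a\<^sup>2 * (b - 2 * c) / c\<^sup>2"
    using c by (simp add: field_simps power2_eq_square)
  also have "\<dots> < 0"
    using a c by (intro divide_neg_pos mult_pos_neg) auto
  finally show False by simp
qed

section \<open>Linear independence of monomials\<close>

fun radix_value :: "nat \<Rightarrow> nat list \<Rightarrow> nat" where
  "radix_value D [] = 0"
| "radix_value D (a # as) = a + D * radix_value D as"

lemma radix_value_inj:
  "length a = length b \<Longrightarrow> \<forall>v\<in>set a. v < D \<Longrightarrow> \<forall>v\<in>set b. v < D \<Longrightarrow>
    radix_value D a = radix_value D b \<Longrightarrow> a = b"
proof (induction a arbitrary: b)
  case Nil
  then show ?case by simp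
next
  case (Cons x a)
  then obtain y b' where b: "b = y # b'" by (cases b) auto
  have xy: "x < D" "y < D" using Cons.prems b by auto
  have eq: "x + D * radix_value D a = y + D * radix_value D b'" using Cons.prems b by simp
  then have "x = y" using xy by (metis mod_mult_self2 mod_less)
  with eq xy have "radix_value D a = radix_value D b'" by simp
  with \<open>x = y\<close> show ?case using Cons b by auto
qed

lemma monom_eval_Cons: "monom_eval (a # as) x = x 0 ^ a * monom_eval as (\<lambda>p. x (Suc p))"
  unfolding monom_eval_def length_Cons prod.lessThan_Suc_shift by simp

lemma monom_eval_radix_power:
  "monom_eval as (\<lambda>p. s ^ (D ^ p)) = (s :: 'a::comm_semiring_1) ^ radix_value D as"
proof (induction as arbitrary: s)
  case Nil
  then show ?case by (simp add: monom_eval_def)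
next
  case (Cons a as)
  then show ?case by (simp add: monom_eval_Cons power_mult power_add)
qed

text \<open>Kronecker substitution: setting \<open>x\<^sub>p = s ^ (D ^ p)\<close> with \<open>D > d\<close> sends the distinct
  monomials \<open>m\<^sub>l\<close> to distinct powers of \<open>s\<close>, so a vanishing combination is the zero polynomial.\<close>

lemma mj_linear_independent:
  assumes "\<And>x :: nat \<Rightarrow> real. (\<Sum>l\<le>kk n d. c l * mj n d l x) = 0" and "l0 \<le> kk n d"
  shows "c l0 = 0"
proof -
  let ?K = "kk n d" and ?D = "Suc d"
  define e where "e l = radix_value ?D (alph n d l)" for l
  have digits: "\<forall>v\<in>set (alph n d l). v < ?D" if "l \<le> ?K" for l
    using alph_in_Iexp[OF that]
    by (force simp: Iexp_def less_Suc_eq_le dest: member_le_sum_list)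
  have inj_e: "inj_on e {..?K}"
  proof (rule inj_onI)
    fix a b assume ab: "a \<in> {..?K}" "b \<in> {..?K}" "e a = e b"
    then have "alph n d a = alph n d b"
      using radix_value_inj[of "alph n d a" "alph n d b" ?D] digits
        alph_in_Iexp[of a n d] alph_in_Iexp[of b n d]
      by (auto simp: e_def Iexp_def)
    then show "a = b" using inj_on_alph ab by (metis inj_onD)
  qed
  define p where "p = (\<Sum>l\<le>?K. monom (c l) (e l))"
  have "poly p s = (\<Sum>l\<le>?K. c l * mj n d l (\<lambda>q. s ^ (?D ^ q)))" for s
    unfolding p_def poly_sum mj_def e_def by (simp add: poly_monom monom_eval_radix_power)
  then have "p = 0" using assms(1) poly_all_0_iff_0 by auto
  moreover have "coeff p (e l0) = c l0"
  proof -
    have "coeff p (e l0) = (\<Sum>l\<le>?K. if l = l0 then c l else 0)"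
      unfolding p_def coeff_sum coeff_monom
      using inj_e assms(2) by (intro sum.cong refl) (auto simp: inj_on_def)
    then show ?thesis using assms(2) by simp
  qed
  ultimately show ?thesis by simp
qed

section \<open>Quadratic forms vanishing on \<open>V\<^sub>i(\<real>)\<close>\<close>

definition quad_exp :: "nat \<Rightarrow> nat \<Rightarrow> nat \<Rightarrow> nat list" where
  "quad_exp K j l = map (\<lambda>p. (if p = j then 1 else 0) + (if p = l then 1 else 0)) [0..<Suc K]"

lemma quad_exp_Iexp: "j \<le> K \<Longrightarrow> l \<le> K \<Longrightarrow> quad_exp K j l \<in> Iexp (Suc K) 2"
  unfolding quad_exp_def Iexp_def
  by (simp add: sum_list_map_eq_sum_count2 sum_set_upt_conv_sum_list_nat[symmetric]
      sum.distrib atLeast0LessThan)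

lemma monom_eval_quad_exp:
  fixes z :: "nat \<Rightarrow> 'a::comm_semiring_1"
  assumes "j \<le> K" "l \<le> K"
  shows "monom_eval (quad_exp K j l) z = z j * z l"
proof -
  have "monom_eval (quad_exp K j l) z
      = (\<Prod>p<Suc K. z p ^ ((if p = j then 1 else 0) + (if p = l then 1 else 0)))"
    unfolding quad_exp_def monom_eval_def length_map length_upt diff_zero
    by (intro prod.cong refl, subst nth_map_upt) auto
  also have "\<dots> = (\<Prod>p<Suc K. (if p = j then z p else 1) * (if p = l then z p else 1))"
    by (intro prod.cong refl) (simp add: power_add)
  also have "\<dots> = z j * z l"
    using assms by (simp add: prod.distrib prod.delta)
  finally show ?thesis .
qed

lemma qform_is_hpoly: "\<exists>c. \<forall>z. hpoly_eval K 2 c z = qform K A z"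
proof -
  define c where "c \<beta> = (\<Sum>j\<le>K. \<Sum>l\<le>K. if quad_exp K j l = \<beta> then A j l else 0)" for \<beta>
  have "hpoly_eval K 2 c z = qform K A z" for z
  proof -
    have "hpoly_eval K 2 c z = (\<Sum>\<beta>\<in>Iexp (Suc K) 2. \<Sum>j\<le>K. \<Sum>l\<le>K.
        if quad_exp K j l = \<beta> then A j l * monom_eval \<beta> z else 0)"
      unfolding hpoly_eval_def c_def sum_distrib_right by (intro sum.cong refl) simp
    also have "\<dots> = (\<Sum>j\<le>K. \<Sum>l\<le>K. \<Sum>\<beta>\<in>Iexp (Suc K) 2.
        if quad_exp K j l = \<beta> then A j l * monom_eval \<beta> z else 0)"
      by (subst sum.swap, subst (2) sum.swap, rule refl)
    also have "\<dots> = qform K A z"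
      unfolding qform_def
      by (intro sum.cong refl) (simp add: finite_Iexp quad_exp_Iexp monom_eval_quad_exp sum.delta mult_ac)
    finally show ?thesis .
  qed
  then show ?thesis by blast
qed

lemma mj_of_real: "mj n d j (\<lambda>p. complex_of_real (x p)) = complex_of_real (mj n d j x)"
  unfolding mj_def monom_eval_def by simp

lemma qform_of_real:
  "qform K (\<lambda>j l. complex_of_real (A j l)) (\<lambda>j. complex_of_real (z j)) = complex_of_real (qform K A z)"
  unfolding qform_def by simp

lemma qform_vanishes_on_Vreal:
  assumes supp: "\<And>j l. D j l \<noteq> 0 \<Longrightarrow> j \<le> n + i \<and> l \<le> n + i"
    and Gram_zero: "\<And>\<beta>. Gram n d D \<beta> = 0"
    and z: "z \<in> Vreal n d i"
  shows "qform (kk n d) D z = 0"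
proof -
  let ?K = "kk n d" and ?D = "\<lambda>j l. complex_of_real (D j l)"
  obtain c where c: "\<And>w. hpoly_eval ?K 2 c w = qform ?K ?D w"
    using qform_is_hpoly by blast
  have "hpoly_eval ?K 2 c w = 0" if w: "w \<in> Hcone n d i" for w
  proof -
    obtain x where x: "\<forall>j\<le>n + i. w j = mj n d j x" using w unfolding Hcone_def by blast
    have "qform ?K ?D w = qform ?K ?D (\<lambda>j. mj n d j x)"
      unfolding qform_def
    proof (intro sum.cong refl)
      fix j l
      show "w j * ?D j l * w l = mj n d j x * ?D j l * mj n d l x"
        using supp[of j l] x by (cases "D j l = 0") auto
    qed
    also have "\<dots> = 0" unfolding qform_mj_eq_Gram Gram_zero by simp
    finally show ?thesis using c by simp
  qed
  then have "hpoly_eval ?K 2 c (\<lambda>j. complex_of_real (z j)) = 0"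
    using z unfolding Vreal_def Vcone_def zariski_closure_def by blast
  then show ?thesis using c qform_of_real by simp
qed

lemma real_point_in_Vreal:
  fixes x :: "nat \<Rightarrow> real"
  assumes "\<forall>j\<le>n + i. z j = mj n d j x" and "nonzero_vec (kk n d) z"
  shows "z \<in> Vreal n d i"
proof -
  let ?z = "\<lambda>j. complex_of_real (z j)"
  have nz: "nonzero_vec (kk n d) ?z"
    using assms(2) unfolding nonzero_vec_def by auto
  have "?z \<in> Hcone n d i"
    unfolding Hcone_def using nz assms(1) mj_of_real
    by (intro CollectI conjI exI[of _ "\<lambda>p. complex_of_real (x p)"]) auto
  then have "?z \<in> Vcone n d i"
    unfolding Vcone_def zariski_closure_def using nz by blast
  then show ?thesis unfolding Vreal_def using assms(2) by blast
qed

section \<open>Averaged Gram matrices\<close>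

definition pair_exp :: "nat \<Rightarrow> nat \<Rightarrow> nat \<times> nat \<Rightarrow> nat list" where
  "pair_exp n d p = map2 (+) (alph n d (fst p)) (alph n d (snd p))"

definition fixed_pairs :: "nat \<Rightarrow> nat \<Rightarrow> nat \<Rightarrow> (nat \<times> nat) set" where
  "fixed_pairs n d i = {..min (n + i) (kk n d)} \<times> {..min (n + i) (kk n d)}"

lemma finite_fixed_pairs [simp]: "finite (fixed_pairs n d i)"
  by (simp add: fixed_pairs_def)

lemma Gram_eq_sum_fiber:
  "Gram n d A \<beta> = (\<Sum>p\<in>{p\<in>{..kk n d} \<times> {..kk n d}. pair_exp n d p = \<beta>}. A (fst p) (snd p))"
  unfolding Gram_def pair_exp_def sum.cartesian_product
  by (simp add: sum.inter_filter case_prod_beta)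

lemma Gram_split_fixed_pairs:
  "Gram n d A \<beta> = (\<Sum>p\<in>{p\<in>fixed_pairs n d i. pair_exp n d p = \<beta>}. A (fst p) (snd p))
    + (\<Sum>p\<in>{p\<in>{..kk n d} \<times> {..kk n d} - fixed_pairs n d i. pair_exp n d p = \<beta>}. A (fst p) (snd p))"
proof -
  have "{p\<in>{..kk n d} \<times> {..kk n d}. pair_exp n d p = \<beta>} = {p\<in>fixed_pairs n d i. pair_exp n d p = \<beta>}
      \<union> {p\<in>{..kk n d} \<times> {..kk n d} - fixed_pairs n d i. pair_exp n d p = \<beta>}"
    by (auto simp: fixed_pairs_def)
  then show ?thesis
    unfolding Gram_eq_sum_fiber by (simp only:) (rule sum.union_disjoint; auto)
qed

definition canon_gram :: "nat \<Rightarrow> nat \<Rightarrow> nat \<Rightarrow> (nat \<Rightarrow> nat \<Rightarrow> real) \<Rightarrow> nat \<Rightarrow> nat \<Rightarrow> real" where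
  "canon_gram n d i A j l = class_avg (fixed_pairs n d i) (pair_exp n d) (\<lambda>p. A (fst p) (snd p)) (j, l)"

definition canonical_grams :: "nat \<Rightarrow> nat \<Rightarrow> nat \<Rightarrow> (nat \<Rightarrow> nat \<Rightarrow> real) set" where
  "canonical_grams n d i = {A \<in> SymMat (kk n d).
     const_on_classes (fixed_pairs n d i) (pair_exp n d) (\<lambda>p. A (fst p) (snd p)) \<and>
     (\<forall>z\<in>Vreal n d i. 0 \<le> qform (kk n d) A z)}"

lemma Gram_canon_gram: "Gram n d (canon_gram n d i A) = Gram n d A"
proof
  fix \<beta>
  have "(\<Sum>p\<in>{p\<in>fixed_pairs n d i. pair_exp n d p = \<beta>}. canon_gram n d i A (fst p) (snd p))
      = (\<Sum>p\<in>{p\<in>fixed_pairs n d i. pair_exp n d p = \<beta>}. A (fst p) (snd p))"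
    unfolding canon_gram_def prod.collapse by (rule sum_class_avg) simp
  moreover have "canon_gram n d i A (fst p) (snd p) = A (fst p) (snd p)" if "p \<notin> fixed_pairs n d i" for p
    using that by (simp add: canon_gram_def class_avg_def)
  ultimately show "Gram n d (canon_gram n d i A) \<beta> = Gram n d A \<beta>"
    unfolding Gram_split_fixed_pairs[of n d _ \<beta> i] by simp
qed

lemma canon_gram_SymMat:
  assumes "A \<in> SymMat (kk n d)"
  shows "canon_gram n d i A \<in> SymMat (kk n d)"
proof -
  have "pair_exp n d (l, j) = pair_exp n d (j, l)" for j l
    by (simp add: pair_exp_def map2_add_commute[of "alph n d l"])
  then show ?thesis
    using assms unfolding SymMat_def canon_gram_def class_avg_def fixed_pairs_def by auto
qed

lemma canon_gram_const_on_classes: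
  "const_on_classes (fixed_pairs n d i) (pair_exp n d) (\<lambda>p. canon_gram n d i A (fst p) (snd p))"
  unfolding canon_gram_def prod.collapse by (rule const_on_classes_class_avg)

lemma qform_canon_gram:
  assumes "z \<in> Vreal n d i"
  shows "qform (kk n d) (canon_gram n d i A) z = qform (kk n d) A z"
proof -
  have "qform (kk n d) (\<lambda>j l. canon_gram n d i A j l - A j l) z = 0"
  proof (rule qform_vanishes_on_Vreal[OF _ _ assms])
    fix j l assume "canon_gram n d i A j l - A j l \<noteq> 0"
    then show "j \<le> n + i \<and> l \<le> n + i"
      by (auto simp: canon_gram_def class_avg_def fixed_pairs_def split: if_splits)
  qed (simp add: Gram_diff Gram_canon_gram)
  then show ?thesis unfolding qform_diff by simp
qed

lemma Ccone_eq_Gram_image: "Ccone n d i = Gram n d ` canonical_grams n d i"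
proof
  show "Ccone n d i \<subseteq> Gram n d ` canonical_grams n d i"
  proof
    fix f assume "f \<in> Ccone n d i"
    then obtain A where A: "A \<in> SymMat (kk n d)" "Gram n d A = f"
      "\<forall>z\<in>Vreal n d i. 0 \<le> qform (kk n d) A z"
      unfolding Ccone_def by blast
    then have "canon_gram n d i A \<in> canonical_grams n d i"
      unfolding canonical_grams_def
      by (simp add: canon_gram_SymMat canon_gram_const_on_classes qform_canon_gram)
    moreover have "Gram n d (canon_gram n d i A) = f" using A(2) by (simp add: Gram_canon_gram)
    ultimately show "f \<in> Gram n d ` canonical_grams n d i" by blast
  qed
  show "Gram n d ` canonical_grams n d i \<subseteq> Ccone n d i"
    unfolding Ccone_def canonical_grams_def using Gram_in_Forms by blast
qed

lemma canonical_grams_divide: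
  assumes "A \<in> canonical_grams n d i" "0 < c"
  shows "(\<lambda>j l. A j l / c) \<in> canonical_grams n d i"
  using assms const_on_classes_divide unfolding canonical_grams_def SymMat_def
  by (auto simp: qform_divide)

lemma canonical_grams_limit:
  assumes G: "\<And>t. G t \<in> canonical_grams n d i" and lim: "\<And>j l. (\<lambda>t. G t j l) \<longlonglongrightarrow> G' j l"
  shows "G' \<in> canonical_grams n d i"
proof -
  have sym: "G t j l = G t l j" and out: "kk n d < j \<or> kk n d < l \<Longrightarrow> G t j l = 0"
    and const: "const_on_classes (fixed_pairs n d i) (pair_exp n d) (\<lambda>p. G t (fst p) (snd p))"
    and nonneg: "z \<in> Vreal n d i \<Longrightarrow> 0 \<le> qform (kk n d) (G t) z" for t j l z
    using G[of t] unfolding canonical_grams_def SymMat_def by blast+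
  have "G' j l = G' l j" for j l
    using lim[of j l] lim[of l j] sym[of _ j l] by (simp add: LIMSEQ_unique)
  moreover have "G' j l = 0" if "kk n d < j \<or> kk n d < l" for j l
    using lim[of j l] out[OF that] by (simp add: LIMSEQ_const_iff)
  moreover have "const_on_classes (fixed_pairs n d i) (pair_exp n d) (\<lambda>p. G' (fst p) (snd p))"
    using const lim by (rule const_on_classes_limit)
  moreover have "0 \<le> qform (kk n d) G' z" if "z \<in> Vreal n d i" for z
    using nonneg[OF that] by (intro LIMSEQ_le_const[OF qform_limit[OF lim]]) auto
  ultimately show ?thesis unfolding canonical_grams_def SymMat_def by blast
qed

lemma Gram_kernel_row_zero:
  assumes A: "A \<in> SymMat (kk n d)" and Gram_zero: "\<And>\<beta>. Gram n d A \<beta> = 0"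
    and nonneg: "\<And>z x. (\<forall>j\<le>n + i. z j = mj n d j x) \<Longrightarrow> 0 \<le> qform (kk n d) A z"
    and j0: "n + i < j0"
  shows "A j0 l = 0"
proof (cases "j0 \<le> kk n d \<and> l \<le> kk n d")
  case True
  let ?K = "kk n d"
  have sym: "\<And>j l. A j l = A l j" using A unfolding SymMat_def by blast
  have "(\<Sum>l\<le>?K. A j0 l * mj n d l x) = 0" for x :: "nat \<Rightarrow> real"
  proof (rule nonneg_quadratic_linear_coeff_zero)
    fix t :: real
    have "0 \<le> qform ?K A (\<lambda>j. mj n d j x + (if j = j0 then t else 0))"
      using j0 by (intro nonneg[of _ x]) auto
    also have "\<dots> = 2 * t * (\<Sum>l\<le>?K. A j0 l * mj n d l x) + t\<^sup>2 * A j0 j0"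
      using qform_shift_coordinate[OF sym, of j0 ?K] True qform_mj_eq_Gram[of n d A x] Gram_zero
      by simp
    finally show "0 \<le> 2 * t * (\<Sum>l\<le>?K. A j0 l * mj n d l x) + t\<^sup>2 * A j0 j0" .
  qed
  then show ?thesis using mj_linear_independent[of "A j0" n d l] True by blast
next
  case False
  then show ?thesis using A unfolding SymMat_def by auto
qed

lemma canonical_grams_Gram_kernel:
  assumes A: "A \<in> canonical_grams n d i" and Gram_zero: "\<And>\<beta>. Gram n d A \<beta> = 0"
  shows "A j l = 0"
proof -
  let ?K = "kk n d"
  have SymMat: "A \<in> SymMat ?K"
    and const: "const_on_classes (fixed_pairs n d i) (pair_exp n d) (\<lambda>p. A (fst p) (snd p))"
    and nonneg_V: "\<forall>z\<in>Vreal n d i. 0 \<le> qform ?K A z"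
    using A unfolding canonical_grams_def by blast+
  have sym: "A j l = A l j" and out: "?K < j \<or> ?K < l \<Longrightarrow> A j l = 0" for j l
    using SymMat unfolding SymMat_def by auto
  have nonneg: "0 \<le> qform ?K A z" if "\<forall>j\<le>n + i. z j = mj n d j x" for z x
  proof (cases "nonzero_vec ?K z")
    case True
    then show ?thesis using nonneg_V real_point_in_Vreal[OF that] by blast
  qed (simp add: qform_zero_vec)
  have row: "A j l = 0" if "n + i < j" for j l
    by (rule Gram_kernel_row_zero[OF SymMat Gram_zero nonneg that])
  have supp: "(j, l) \<in> fixed_pairs n d i" if "A j l \<noteq> 0" for j l
  proof -
    have "j \<le> ?K" "l \<le> ?K" using out that by (auto simp: not_less[symmetric])
    moreover have "j \<le> n + i" using row[of j l] that by (auto simp: not_less[symmetric])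
    moreover have "l \<le> n + i" using row[of l j] that sym[of j l] by (auto simp: not_less[symmetric])
    ultimately show ?thesis by (simp add: fixed_pairs_def)
  qed
  show ?thesis
  proof (cases "(j, l) \<in> fixed_pairs n d i")
    case True
    let ?\<beta> = "pair_exp n d (j, l)"
    have "(\<Sum>p\<in>{p\<in>{..?K} \<times> {..?K} - fixed_pairs n d i. pair_exp n d p = ?\<beta>}. A (fst p) (snd p)) = 0"
      using supp by (intro sum.neutral) force
    then have "(\<Sum>p\<in>{p\<in>fixed_pairs n d i. pair_exp n d p = ?\<beta>}. A (fst p) (snd p)) = 0"
      using Gram_split_fixed_pairs[of n d A ?\<beta> i] Gram_zero by simp
    from const_on_classes_zero[OF finite_fixed_pairs const True] this show ?thesis by simp
  next
    case False
    then show ?thesis using supp by blast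
  qed
qed

theorem theorem2p1:
  fixes n d i :: nat
  assumes "1 \<le> n" and "1 \<le> d" and "i \<le> kk n d - n"
  shows "closed (Ccone n d i)"
proof -
  have "closed (Gram n d ` canonical_grams n d i)"
  proof (rule closed_cone_image)
    show "canonical_grams n d i \<subseteq> SymMat (kk n d)" unfolding canonical_grams_def by blast
  qed (fact canonical_grams_divide canonical_grams_limit Gram_divide Gram_limit
      canonical_grams_Gram_kernel)+
  then show ?thesis by (simp only: Ccone_eq_Gram_image)
qed

end
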